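(* Consider the average-cost MDP described in the context, and let $\pi^\star(s)=\arg\min_{a\in\mathcal{A}(s)}Q(s,a)$ be the age-optimal policy. Fix $j\in\mathcal{I}$ and two states $s^1=\{(b_i^1,A_i^1,g_i^1,h_i^1)\}_{i\in\mathcal{I}}$ and $s^2=\{(b_i^2,A_i^2,g_i^2,h_i^2)\}_{i\in\mathcal{I}}$ such that (i) $A_j^2\ge A_j^1$, (ii) $A_i^2=A_i^1$ for all $i\neq j$, and (iii) $b_i^1=b_i^2$, $g_i^1=g_i^2$, $h_i^1=h_i^2$ for all $i\in\mathcal{I}$. If $\pi^\star(s^1)=T_j$, then $\pi^\star(s^2)=T_j$.
   Context: There are $N$ source nodes indexed by $\mathcal{I}=\{1,\dots,N\}$ and one destination. Time is slotted. The state of source $i$ is $s_i=(b_i,A_i,g_i,h_i)$, where $b_i\in\{0,1,\dots,b_{\max,i}\}$ is the discrete battery level (in energy quanta of $B_{\max,i}/b_{\max,i}$ joules), $A_i\in\{1,\dots,A_{\max,i}\}$ is the AoI of process $i$ at the destination, and $g_i,h_i$ are downlink/uplink channel power gains taking finitely many ordered values; the system state is $s=\{s_i\}_{i\in\mathcal{I}}$. Channel gains are i.i.d. over slots and independent of everything else, with pmfs $\mathbb{P}(g_i),\mathbb{P}(h_i)$. Actions $\mathcal{A}=\{H,T_1,\dots,T_N\}$ ($H$: energy transfer by destination; $T_i$: source $i$ transmits an update). Let $e_i^{\rm H}=\lfloor \frac{b_{\max,i}}{B_{\max,i}}\eta P g_i\rfloor$ and $e_i^{\rm T}=\lceil \frac{b_{\max,i}}{B_{\max,i}}\frac{\sigma^2}{h_i}(2^{\bar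 S}-1)\rceil$ with positive constants $\eta,P,\sigma^2,\bar S$; $T_i$ is feasible only if $b_i\ge e_i^{\rm T}$, and $\mathcal{A}(s)$ is the feasible action set. Transitions: $b_i'=b_i-e_i^{\rm T}$ if $a=T_i$, $b_i'=\min\{b_{\max,i},b_i+e_i^{\rm H}\}$ if $a=H$, else $b_i'=b_i$; $A_i'=1$ if $a=T_i$, else $A_i'=\min\{A_{\max,i},A_i+1\}$; $g_i',h_i'$ fresh draws; so $\mathbb{P}(s'\mid s,a)=\prod_i\mathbb{1}(b_i')\mathbb{1}(A_i')\mathbb{P}(g_i')\mathbb{P}(h_i')$. Cost per slot $\sum_i\theta_iA_i$, $\theta_i\ge0$, $\sum_i\theta_i=1$. $V$ and $\bar A^\star$ satisfy the Bellman equation $\bar A^\star+V(s)=\min_{a\in\mathcal{A}(s)}Q(s,a)$ with $Q(s,a)=\sum_i\theta_iA_i+\sum_{s'}\mathbb{P}(s'\mid s,a)V(s')$. *)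

theory Defs
  imports "HOL-Probability.Probability_Mass_Function" "HOL-Library.FuncSet"
begin

text \<open>State of the system: battery levels b, AoI values A, downlink gains g, uplink gains h,
  each as a function of the source index (extensional on the source set {1..N}).\<close>
type_synonym state = "(nat \<Rightarrow> nat) \<times> (nat \<Rightarrow> nat) \<times> (nat \<Rightarrow> real) \<times> (nat \<Rightarrow> real)"

datatype action = Harvest | Transmit nat

record aoi_sys =
  nsrc   :: nat
  bmax   :: "nat \<Rightarrow> nat"
  Bmax   :: "nat \<Rightarrow> real"
  Amax   :: "nat \<Rightarrow> nat"
  eta    :: real
  Ptx    :: real
  sigma2 :: real
  Sbar   :: real
  pg     :: "nat \<Rightarrow> real pmf"
  ph     :: "nat \<Rightarrow> real pmf"
  theta  :: "nat \<Rightarrow> real"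

definition srcs :: "aoi_sys \<Rightarrow> nat set" where
  "srcs M = {1..nsrc M}"

definition eH :: "aoi_sys \<Rightarrow> nat \<Rightarrow> real \<Rightarrow> nat" where
  "eH M i g = nat \<lfloor>real (bmax M i) / Bmax M i * eta M * Ptx M * g\<rfloor>"

definition eT :: "aoi_sys \<Rightarrow> nat \<Rightarrow> real \<Rightarrow> nat" where
  "eT M i h = nat \<lceil>real (bmax M i) / Bmax M i * (sigma2 M / h) * (2 powr Sbar M - 1)\<rceil>"

definition valid_sys :: "aoi_sys \<Rightarrow> bool" where
  "valid_sys M \<longleftrightarrow>
     eta M > 0 \<and> Ptx M > 0 \<and> sigma2 M > 0 \<and> Sbar M > 0 \<and>
     (\<forall>i\<in>srcs M. Bmax M i > 0 \<and> bmax M i > 0 \<and> Amax M i \<ge> 1 \<and>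
        finite (set_pmf (pg M i)) \<and> finite (set_pmf (ph M i)) \<and>
        set_pmf (pg M i) \<subseteq> {0..} \<and> set_pmf (ph M i) \<subseteq> {0<..} \<and>
        theta M i \<ge> 0) \<and>
     (\<Sum>i\<in>srcs M. theta M i) = 1"

definition states :: "aoi_sys \<Rightarrow> state set" where
  "states M = {(b, A, g, h).
      b \<in> (\<Pi>\<^sub>E i\<in>srcs M. {0..bmax M i}) \<and>
      A \<in> (\<Pi>\<^sub>E i\<in>srcs M. {1..Amax M i}) \<and>
      g \<in> (\<Pi>\<^sub>E i\<in>srcs M. set_pmf (pg M i)) \<and>
      h \<in> (\<Pi>\<^sub>E i\<in>srcs M. set_pmf (ph M i))}"

definition feasible :: "aoi_sys \<Rightarrow> state \<Rightarrow> action set" where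
  "feasible M s = (case s of (b, A, g, h) \<Rightarrow>
      {Harvest} \<union> {Transmit i | i. i \<in> srcs M \<and> eT M i (h i) \<le> b i})"

definition next_batt :: "aoi_sys \<Rightarrow> state \<Rightarrow> action \<Rightarrow> nat \<Rightarrow> nat" where
  "next_batt M s a = (case s of (b, A, g, h) \<Rightarrow>
     restrict (\<lambda>i. case a of
                 Transmit j \<Rightarrow> if i = j then b i - eT M i (h i) else b i
               | Harvest \<Rightarrow> min (bmax M i) (b i + eH M i (g i))) (srcs M))"

definition next_age :: "aoi_sys \<Rightarrow> state \<Rightarrow> action \<Rightarrow> nat \<Rightarrow> nat" where
  "next_age M s a = (case s of (b, A, g, h) \<Rightarrow>
     restrict (\<lambda>i. if a = Transmit i then 1 else min (Amax M i) (A i + 1)) (srcs M))"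

definition trans_prob :: "aoi_sys \<Rightarrow> state \<Rightarrow> action \<Rightarrow> state \<Rightarrow> real" where
  "trans_prob M s a s' = (case s' of (b', A', g', h') \<Rightarrow>
     (if b' = next_batt M s a \<and> A' = next_age M s a
      then (\<Prod>i\<in>srcs M. pmf (pg M i) (g' i) * pmf (ph M i) (h' i)) else 0))"

definition cost :: "aoi_sys \<Rightarrow> state \<Rightarrow> real" where
  "cost M s = (case s of (b, A, g, h) \<Rightarrow> \<Sum>i\<in>srcs M. theta M i * real (A i))"

definition Qval :: "aoi_sys \<Rightarrow> (state \<Rightarrow> real) \<Rightarrow> state \<Rightarrow> action \<Rightarrow> real" where
  "Qval M V s a = cost M s + (\<Sum>s'\<in>states M. trans_prob M s a s' * V s')"

definition bellman :: "aoi_sys \<Rightarrow> real \<Rightarrow> (state \<Rightarrow> real) \<Rightarrow> bool" where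
  "bellman M Abar V \<longleftrightarrow> (\<forall>s\<in>states M. Abar + V s = Min (Qval M V s ` feasible M s))"

definition opt_actions :: "aoi_sys \<Rightarrow> (state \<Rightarrow> real) \<Rightarrow> state \<Rightarrow> action set" where
  "opt_actions M V s = {a \<in> feasible M s. \<forall>a'\<in>feasible M s. Qval M V s a \<le> Qval M V s a'}"

end

theory Submission
  imports Defs
begin

text \<open>Transmitting from source \<open>j\<close> resets \<open>A\<^sub>j\<close> to 1, so from two states that differ only in
  \<open>A\<^sub>j\<close> the action \<open>T\<^sub>j\<close> leads to the same next state, and its Q-values differ exactly by the
  difference of the immediate costs. Every other action preserves the gap in \<open>A\<^sub>j\<close>, so once
  \<open>V\<close> is known to be nondecreasing in \<open>A\<^sub>j\<close> its Q-values differ by at least that much; hence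
  \<open>T\<^sub>j\<close> stays optimal. Monotonicity of \<open>V\<close> follows from the Bellman equation by downward
  induction on \<open>A\<^sub>j \<le> Amax\<^sub>j\<close>: after one step of an action other than \<open>T\<^sub>j\<close> the age of
  source \<open>j\<close> is strictly larger (unless \<open>A\<^sub>j = Amax\<^sub>j\<close>, where the two states coincide), so only
  the induction hypothesis is needed there.\<close>

lemma Min_image_mono:
  fixes f g :: "'a \<Rightarrow> 'b::linorder"
  assumes "finite A" "A \<noteq> {}" "\<And>x. x \<in> A \<Longrightarrow> f x \<le> g x"
  shows "Min (f ` A) \<le> Min (g ` A)"
  using assms by (auto intro: order.trans[OF Min_le])

definition batteries :: "aoi_sys \<Rightarrow> (nat \<Rightarrow> nat) set" where
  "batteries M = (\<Pi>\<^sub>E i\<in>srcs M. {0..bmax M i})"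

definition ages :: "aoi_sys \<Rightarrow> (nat \<Rightarrow> nat) set" where
  "ages M = (\<Pi>\<^sub>E i\<in>srcs M. {1..Amax M i})"

definition channels :: "aoi_sys \<Rightarrow> ((nat \<Rightarrow> real) \<times> (nat \<Rightarrow> real)) set" where
  "channels M = (\<Pi>\<^sub>E i\<in>srcs M. set_pmf (pg M i)) \<times> (\<Pi>\<^sub>E i\<in>srcs M. set_pmf (ph M i))"

definition channel_prob :: "aoi_sys \<Rightarrow> (nat \<Rightarrow> real) \<Rightarrow> (nat \<Rightarrow> real) \<Rightarrow> real" where
  "channel_prob M g h = (\<Prod>i\<in>srcs M. pmf (pg M i) (g i) * pmf (ph M i) (h i))"

definition older_at :: "aoi_sys \<Rightarrow> nat \<Rightarrow> (nat \<Rightarrow> nat) \<Rightarrow> (nat \<Rightarrow> nat) \<Rightarrow> bool" where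
  "older_at M j A1 A2 \<longleftrightarrow> A1 j \<le> A2 j \<and> (\<forall>i\<in>srcs M. i \<noteq> j \<longrightarrow> A2 i = A1 i)"

lemma states_eq_product: "states M = batteries M \<times> ages M \<times> channels M"
  unfolding states_def batteries_def ages_def channels_def by auto

lemma finite_states:
  assumes "valid_sys M"
  shows "finite (states M)"
proof -
  have "finite (srcs M)" by (simp add: srcs_def)
  with assms have "finite (batteries M)" "finite (ages M)" "finite (channels M)"
    unfolding batteries_def ages_def channels_def valid_sys_def
    by (auto intro!: finite_PiE)
  then show ?thesis by (simp add: states_eq_product)
qed

lemma channel_prob_nonneg: "channel_prob M g h \<ge> 0"
  unfolding channel_prob_def by (intro prod_nonneg) auto

lemma next_batt_in_batteries:
  assumes "(b, A, g, h) \<in> states M"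
  shows "next_batt M (b, A, g, h) a \<in> batteries M"
  using assms unfolding next_batt_def batteries_def states_def
  by (fastforce simp: PiE_iff split: action.split)

lemma next_age_in_ages:
  assumes "valid_sys M" "(b, A, g, h) \<in> states M"
  shows "next_age M (b, A, g, h) a \<in> ages M"
  using assms unfolding next_age_def ages_def states_def valid_sys_def
  by (auto simp: PiE_iff)

lemma sum_trans_prob:
  assumes "finite (states M)"
    and "next_batt M s a \<in> batteries M" "next_age M s a \<in> ages M"
  shows "(\<Sum>s'\<in>states M. trans_prob M s a s' * F s') =
    (\<Sum>(g', h')\<in>channels M. channel_prob M g' h' * F (next_batt M s a, next_age M s a, g', h'))"
proof -
  define succ :: "(nat \<Rightarrow> real) \<times> (nat \<Rightarrow> real) \<Rightarrow> state" where "succ = (\<lambda>(g', h'). (next_batt M s a, next_age M s a, g', h'))"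
  have succ_states: "succ ` channels M \<subseteq> states M"
    using assms(2,3) by (auto simp: succ_def states_eq_product)
  have "(\<Sum>s'\<in>states M. trans_prob M s a s' * F s') =
      (\<Sum>s'\<in>succ ` channels M. trans_prob M s a s' * F s')"
    using assms(1) succ_states
    by (intro sum.mono_neutral_right)
       (auto simp: trans_prob_def succ_def states_eq_product image_iff)
  also have "\<dots> = (\<Sum>gh\<in>channels M. trans_prob M s a (succ gh) * F (succ gh))"
    by (subst sum.reindex) (auto simp: inj_on_def succ_def)
  also have "\<dots> = (\<Sum>(g', h')\<in>channels M. channel_prob M g' h' * F (succ (g', h')))"
    by (intro sum.cong) (auto simp: trans_prob_def channel_prob_def succ_def)
  finally show ?thesis by (simp add: succ_def)
qed

lemma older_at_eq_if_Amax:
  assumes "(b, A1, g, h) \<in> states M" "(b, A2, g, h) \<in> states M" "j \<in> srcs M"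
    and "older_at M j A1 A2" "Amax M j \<le> A1 j"
  shows "A2 = A1"
proof
  fix i
  have "A1 \<in> extensional (srcs M)" "A2 \<in> extensional (srcs M)" "A2 j \<le> Amax M j"
    using assms(1-3) unfolding states_def by (auto simp: PiE_def)
  then show "A2 i = A1 i"
    using assms(3-5) unfolding older_at_def by (cases "i \<in> srcs M") (auto simp: extensional_def)
qed

lemma cost_mono_older_at:
  assumes "valid_sys M" "older_at M j A1 A2"
  shows "cost M (b, A1, g, h) \<le> cost M (b, A2, g, h)"
  using assms unfolding cost_def older_at_def valid_sys_def
  by (auto intro!: sum_mono mult_left_mono)

lemma trans_prob_Transmit_eq:
  assumes "\<forall>i\<in>srcs M. i \<noteq> j \<longrightarrow> A2 i = A1 i"
  shows "trans_prob M (b, A2, g, h) (Transmit j) = trans_prob M (b, A1, g, h) (Transmit j)"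
proof -
  have "next_age M (b, A2, g, h) (Transmit j) = next_age M (b, A1, g, h) (Transmit j)"
    using assms unfolding next_age_def by (auto simp: restrict_def)
  moreover have "next_batt M (b, A2, g, h) (Transmit j) = next_batt M (b, A1, g, h) (Transmit j)"
    unfolding next_batt_def by simp
  ultimately show ?thesis by (simp add: trans_prob_def fun_eq_iff)
qed

lemma Qval_Transmit_shift:
  assumes "\<forall>i\<in>srcs M. i \<noteq> j \<longrightarrow> A2 i = A1 i"
  shows "Qval M V (b, A2, g, h) (Transmit j) =
    Qval M V (b, A1, g, h) (Transmit j) + (cost M (b, A2, g, h) - cost M (b, A1, g, h))"
  using trans_prob_Transmit_eq[OF assms] unfolding Qval_def by simp

lemma next_age_older_at:
  assumes "older_at M j A1 A2"
  shows "older_at M j (next_age M (b, A1, g, h) a) (next_age M (b, A2, g, h) a)"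
  using assms unfolding older_at_def next_age_def by auto

lemma Qval_older_at_ge:
  assumes valid: "valid_sys M" and j: "j \<in> srcs M"
    and s1: "(b, A1, g, h) \<in> states M" and s2: "(b, A2, g, h) \<in> states M"
    and older: "older_at M j A1 A2"
    and V_mono: "\<And>b' A1' A2' g' h'. (b', A1', g', h') \<in> states M \<Longrightarrow> (b', A2', g', h') \<in> states M
       \<Longrightarrow> older_at M j A1' A2' \<Longrightarrow> A1 j < A1' j \<Longrightarrow> V (b', A1', g', h') \<le> V (b', A2', g', h')"
  shows "Qval M V (b, A1, g, h) a + (cost M (b, A2, g, h) - cost M (b, A1, g, h))
    \<le> Qval M V (b, A2, g, h) a"
proof (cases "a = Transmit j \<or> Amax M j \<le> A1 j")
  case True
  then consider "a = Transmit j" | "A2 = A1"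
    using older_at_eq_if_Amax[OF s1 s2 j older] by blast
  then show ?thesis
  proof cases
    case 1
    then show ?thesis
      using Qval_Transmit_shift[of M j A2 A1 V b g h] older by (simp add: older_at_def)
  qed simp
next
  case False
  let ?nb = "next_batt M (b, A1, g, h) a"
  let ?na1 = "next_age M (b, A1, g, h) a" and ?na2 = "next_age M (b, A2, g, h) a"
  have nb: "next_batt M (b, A2, g, h) a = ?nb"
    unfolding next_batt_def by simp
  have nb_in: "?nb \<in> batteries M" and na_in: "?na1 \<in> ages M" "?na2 \<in> ages M"
    using next_batt_in_batteries[OF s1] next_age_in_ages[OF valid s1] next_age_in_ages[OF valid s2] .
  have "A1 j < ?na1 j"
    using False j unfolding next_age_def by auto
  then have pointwise: "channel_prob M g' h' * V (?nb, ?na1, g', h')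
      \<le> channel_prob M g' h' * V (?nb, ?na2, g', h')" if "(g', h') \<in> channels M" for g' h'
    using that nb_in na_in next_age_older_at[OF older]
    by (intro mult_left_mono channel_prob_nonneg V_mono) (auto simp: states_eq_product)
  have fin: "finite (states M)"
    using valid by (rule finite_states)
  have "(\<Sum>s'\<in>states M. trans_prob M (b, A1, g, h) a s' * V s')
      = (\<Sum>(g', h')\<in>channels M. channel_prob M g' h' * V (?nb, ?na1, g', h'))"
    using fin nb_in na_in(1) by (rule sum_trans_prob)
  also have "\<dots> \<le> (\<Sum>(g', h')\<in>channels M. channel_prob M g' h' * V (?nb, ?na2, g', h'))"
    using pointwise by (intro sum_mono) (auto split: prod.split)
  also have "\<dots> = (\<Sum>s'\<in>states M. trans_prob M (b, A2, g, h) a s' * V s')"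
    using sum_trans_prob[OF fin, of "(b, A2, g, h)" a V] nb_in na_in(2) nb by simp
  finally show ?thesis unfolding Qval_def by simp
qed

lemma V_mono_older_at:
  assumes valid: "valid_sys M" and bell: "bellman M Abar V" and j: "j \<in> srcs M"
    and "(b, A1, g, h) \<in> states M" "(b, A2, g, h) \<in> states M" "older_at M j A1 A2"
  shows "V (b, A1, g, h) \<le> V (b, A2, g, h)"
  using assms(4-)
proof (induction "Amax M j - A1 j" arbitrary: b A1 A2 g h rule: less_induct)
  case less
  let ?F = "feasible M (b, A1, g, h)"
  have F: "finite ?F" "?F \<noteq> {}" "feasible M (b, A2, g, h) = ?F"
    by (auto simp: feasible_def srcs_def)
  have "Qval M V (b, A1, g, h) a \<le> Qval M V (b, A2, g, h) a" for a
  proof -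
    have IH: "V (b', A1', g', h') \<le> V (b', A2', g', h')"
      if "(b', A1', g', h') \<in> states M" "(b', A2', g', h') \<in> states M"
        "older_at M j A1' A2'" "A1 j < A1' j" for b' A1' A2' g' h'
    proof (rule less.hyps[OF _ that(1-3)])
      have "A1' j \<le> Amax M j" using that(1) j by (auto simp: states_def)
      then show "Amax M j - A1' j < Amax M j - A1 j" using that(4) by linarith
    qed
    then show ?thesis
      using Qval_older_at_ge[where V = V, OF valid j less.prems IH, of a]
        cost_mono_older_at[OF valid less.prems(3), of b g h] by linarith
  qed
  then have "Min (Qval M V (b, A1, g, h) ` ?F) \<le> Min (Qval M V (b, A2, g, h) ` ?F)"
    using F by (intro Min_image_mono)
  moreover have "Abar + V (b, A1, g, h) = Min (Qval M V (b, A1, g, h) ` ?F)"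
    and "Abar + V (b, A2, g, h) = Min (Qval M V (b, A2, g, h) ` ?F)"
    using bell less.prems(1,2) F(3) unfolding bellman_def by auto
  ultimately show ?case by linarith
qed

theorem theorem1:
  fixes M :: aoi_sys and Abar :: real and V :: "state \<Rightarrow> real"
    and j :: nat and b A1 A2 :: "nat \<Rightarrow> nat" and g h :: "nat \<Rightarrow> real"
  assumes "valid_sys M"
    and "bellman M Abar V"
    and "j \<in> srcs M"
    and "(b, A1, g, h) \<in> states M"
    and "(b, A2, g, h) \<in> states M"
    and "A2 j \<ge> A1 j"
    and "\<forall>i\<in>srcs M. i \<noteq> j \<longrightarrow> A2 i = A1 i"
    and "Transmit j \<in> opt_actions M V (b, A1, g, h)"
  shows "Transmit j \<in> opt_actions M V (b, A2, g, h)"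
proof -
  let ?Q1 = "Qval M V (b, A1, g, h)" and ?Q2 = "Qval M V (b, A2, g, h)"
  let ?\<Delta> = "cost M (b, A2, g, h) - cost M (b, A1, g, h)"
  have older: "older_at M j A1 A2"
    using assms(6,7) by (simp add: older_at_def)
  have F: "feasible M (b, A2, g, h) = feasible M (b, A1, g, h)"
    by (simp add: feasible_def)
  have "?Q2 (Transmit j) \<le> ?Q2 a" if "a \<in> feasible M (b, A1, g, h)" for a
  proof -
    have "?Q2 (Transmit j) = ?Q1 (Transmit j) + ?\<Delta>"
      using assms(7) by (rule Qval_Transmit_shift)
    also have "\<dots> \<le> ?Q1 a + ?\<Delta>"
      using assms(8) that by (simp add: opt_actions_def)
    also have "\<dots> \<le> ?Q2 a"
      using V_mono_older_at[OF assms(1-3)] by (intro Qval_older_at_ge[OF assms(1,3-5) older])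
    finally show ?thesis .
  qed
  then show ?thesis
    using assms(8) F by (simp add: opt_actions_def)
qed

end
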